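(* Let $n\ge 1$, $d_1,\dots,d_n\ge 1$, $L_i\in\mathbb{C}^{d_i\times d_i}$ ($i=1,\dots,n$) and $C_{i,i-1}\in\mathbb{C}^{d_i\times d_{i-1}}$ ($i=2,\dots,n$). Assume: (i) each $L_i$ is invertible and diagonalizable, $L_iV_i=V_i\Lambda_i$ with $V_i$ invertible and $\Lambda_i=\mathrm{diag}(\lambda_{i,1},\dots,\lambda_{i,d_i})$; (ii) $\sigma(L_i)\cap\sigma(L_j)=\emptyset$ for all $i\neq j$; (iii) $\|L_1\|<\|L_2\|<\cdots<\|L_n\|\le 1$. Then for every $i\in\{1,\dots,n\}$, every $x=(x_1,\dots,x_n)\in\mathbb{C}^{d_1}\times\cdots\times\mathbb{C}^{d_n}$ and every integer $t\ge 0$, $$\big\|\Pi_i\circ\mathsf{Lin}^{\circ t}(x)-\Pi_i\circ\mathsf{Nom}^{\circ t}(\mathsf{pert}(x))\big\|\le\sum_{j=1}^{i-1}\|D_{i,j}\|\,\big\|L_j^t\,\mathsf{pert}_j(x_1,\dots,x_j)\big\|\le\Big(\sum_{j=1}^{i-1}\|D_{i,j}\|\,\|\mathsf{pert}_j(x_1,\dots,x_j)\|\Big)\|L_i\|^t$$ (the empty sum being $0$), and $$\lim_{t\to\infty}\frac{\big\|\Pi_i\circ\mathsf{Lin}^{\circ t}(x)-\Pi_i\circ\mathsf{Nom}^{\circ t}(\mathsf{pert}(x))\big\|}{\|L_i\|^t}=0.$$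
   Context: Each $\mathbb{C}^{d_i}$ carries a fixed norm $\|\cdot\|$, and matrices carry the induced operator norm. $\Pi_i:\mathbb{C}^{d_1}\times\cdots\times\mathbb{C}^{d_n}\to\mathbb{C}^{d_i}$ is the canonical projection $\Pi_i(x_1,\dots,x_n)=x_i$. The linear chained cascade map is $\mathsf{Lin}(x_1,\dots,x_n)=(L_1x_1,\;L_2x_2+C_{2,1}x_1,\;\dots,\;L_nx_n+C_{n,n-1}x_{n-1})$ and the nominal map is $\mathsf{Nom}(x_1,\dots,x_n)=(L_1x_1,\dots,L_nx_n)$; $\mathsf{F}^{\circ t}$ denotes the $t$-fold iterate (identity for $t=0$). Matrices $D_{i,j}\in\mathbb{C}^{d_i\times d_j}$ ($1\le j\le i\le n$) are defined recursively in $i$: $D_{i,i}=I_{d_i}$; for $i\ge 2$ and $1\le j\le i-1$, let $\tilde C_{i,j}\in\mathbb{C}^{d_i\times d_j}$ have entries $[\tilde C_{i,j}]_{\ell,m}=[V_i^{-1}C_{i,i-1}D_{i-1,j}V_j]_{\ell,m}\,(1-\lambda_{j,m}/\lambda_{i,\ell})^{-1}$ and set $D_{i,j}=L_i^{-1}V_i\tilde C_{i,j}V_j^{-1}$. The maps $\mathsf{pert}_i:\mathbb{C}^{d_1}\times\cdots\times\mathbb{C}^{d_i}\to\mathbb{C}^{d_i}$ are defined recursively by $\mathsf{pert}_1(x_1)=x_1$ and $\mathsf{pert}_i(x_1,\dots,x_i)=x_i+\sum_{j=1}^{i-1}(-1)^{i-1-j}D_{i,j}\,\mathsf{pert}_j(x_1,\dots,x_j)$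 for $i\ge 2$, and $\mathsf{pert}(x_1,\dots,x_n)=(\mathsf{pert}_1(x_1),\mathsf{pert}_2(x_1,x_2),\dots,\mathsf{pert}_n(x_1,\dots,x_n))$. *)

theory Defs
  imports "Jordan_Normal_Form.Spectral_Radius"
begin

(* Vectors of C^{d} are elements of carrier_vec d; matrices of C^{r x c} are elements of
   carrier_mat r c (Jordan_Normal_Form).  Block indices run over 1..n as in the paper. *)

definition is_vnorm :: "nat \<Rightarrow> (complex vec \<Rightarrow> real) \<Rightarrow> bool" where
  "is_vnorm dd N \<longleftrightarrow>
     (\<forall>x\<in>carrier_vec dd. \<forall>y\<in>carrier_vec dd. N (x + y) \<le> N x + N y) \<and>
     (\<forall>c. \<forall>x\<in>carrier_vec dd. N (c \<cdot>\<^sub>v x) = cmod c * N x) \<and>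
     (\<forall>x\<in>carrier_vec dd. N x = 0 \<longleftrightarrow> x = 0\<^sub>v dd)"

definition opnorm :: "(complex vec \<Rightarrow> real) \<Rightarrow> (complex vec \<Rightarrow> real) \<Rightarrow> nat \<Rightarrow> complex mat \<Rightarrow> real" where
  "opnorm Nin Nout dc A = Sup {Nout (A *\<^sub>v v) | v. v \<in> carrier_vec dc \<and> Nin v \<le> 1}"

definition minv :: "complex mat \<Rightarrow> complex mat" where
  "minv A = (SOME B. B \<in> carrier_mat (dim_row A) (dim_row A) \<and> inverts_mat A B \<and> inverts_mat B A)"

text \<open>Diagonal matrix diag(lam 0, ..., lam (k-1)) (0-based entries; the paper's
  lambda_{i,l} is lam i (l-1)).\<close>
definition diagm :: "nat \<Rightarrow> (nat \<Rightarrow> complex) \<Rightarrow> complex mat" where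
  "diagm k f = mat k k (\<lambda>(r, c). if r = c then f r else 0)"

text \<open>Arguments: dimensions d, matrices L, eigenvector matrices V,
  coupling matrices C (C i = C_{i,i-1}), eigenvalues lam (lam i l is the l-th, 0-based,
  diagonal entry of Lambda_i).\<close>
fun Dmat :: "(nat \<Rightarrow> nat) \<Rightarrow> (nat \<Rightarrow> complex mat) \<Rightarrow> (nat \<Rightarrow> complex mat) \<Rightarrow> (nat \<Rightarrow> complex mat)
      \<Rightarrow> (nat \<Rightarrow> nat \<Rightarrow> complex) \<Rightarrow> nat \<Rightarrow> nat \<Rightarrow> complex mat" where
  "Dmat d L V C lam 0 j = 1\<^sub>m (d 0)"
| "Dmat d L V C lam (Suc k) j =
     (if j = Suc k then 1\<^sub>m (d (Suc k))
      else
        (let i = Suc k;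
             M = minv (V i) * C i * Dmat d L V C lam k j * V j;
             Ct = mat (d i) (d j) (\<lambda>(l, m). M $$ (l, m) / (1 - lam j m / lam i l))
         in minv (L i) * V i * Ct * minv (V j)))"

fun pert :: "(nat \<Rightarrow> nat) \<Rightarrow> (nat \<Rightarrow> nat \<Rightarrow> complex mat) \<Rightarrow> (nat \<Rightarrow> complex vec) \<Rightarrow> nat \<Rightarrow> complex vec" where
  "pert d D x i = (if i \<le> 1 then x i
      else vec (d i) (\<lambda>r. x i $ r +
              (\<Sum>j\<in>{1..<i}. (-1) ^ (i - 1 - j) * (D i j *\<^sub>v pert d D x j) $ r)))"

definition pertv :: "(nat \<Rightarrow> nat) \<Rightarrow> (nat \<Rightarrow> nat \<Rightarrow> complex mat) \<Rightarrow> (nat \<Rightarrow> complex vec) \<Rightarrow> (nat \<Rightarrow> complex vec)" where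
  "pertv d D x = (\<lambda>i. pert d D x i)"

definition Lin :: "(nat \<Rightarrow> complex mat) \<Rightarrow> (nat \<Rightarrow> complex mat) \<Rightarrow> (nat \<Rightarrow> complex vec) \<Rightarrow> (nat \<Rightarrow> complex vec)" where
  "Lin L C x = (\<lambda>i. if i \<le> 1 then L i *\<^sub>v x i else L i *\<^sub>v x i + C i *\<^sub>v x (i - 1))"

definition Nom :: "(nat \<Rightarrow> complex mat) \<Rightarrow> (nat \<Rightarrow> complex vec) \<Rightarrow> (nat \<Rightarrow> complex vec)" where
  "Nom L x = (\<lambda>i. L i *\<^sub>v x i)"

end

theory Submission
  imports Defs "HOL-Analysis.Function_Topology" "HOL-Analysis.Function_Metric"
    "HOL-Analysis.Elementary_Normed_Spaces"
    "HOL-Analysis.Topology_Euclidean_Space"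
begin

(* Conjugation by the block-triangular change of variables x |-> pert(x) decouples the cascade:
   by induction on t, block i of Lin^t x equals sum_{j<=i} (-1)^(i-j) D_{i,j} L_j^t pert_j(x).
   The induction step is the Sylvester identity L_i D_{i,j} = D_{i,j} L_j + C_{i,i-1} D_{i-1,j};
   in the eigenbases of L_i and L_j it becomes an entrywise equation solved by C~_{i,j}, whose
   denominators 1 - lambda_{j,m}/lambda_{i,l} are nonzero because the spectra are disjoint.
   The term j = i is block i of Nom^t (pert x), so the error is at most
   sum_{j<i} ||D_{i,j}|| ||L_j||^t ||pert_j(x)||, which is o(||L_i||^t) since ||L_j|| < ||L_i||.
   The induced norms are finite because every norm on C^d dominates the coordinates, by
   compactness of the unit sphere of the sup-norm. *)

lemma vnorm_triangle:
  "is_vnorm dd N \<Longrightarrow> x \<in> carrier_vec dd \<Longrightarrow> y \<in> carrier_vec dd \<Longrightarrow> N (x + y) \<le> N x + N y"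
  unfolding is_vnorm_def by blast

lemma vnorm_scale: "is_vnorm dd N \<Longrightarrow> x \<in> carrier_vec dd \<Longrightarrow> N (c \<cdot>\<^sub>v x) = cmod c * N x"
  unfolding is_vnorm_def by blast

lemma vnorm_eq_0_iff: "is_vnorm dd N \<Longrightarrow> x \<in> carrier_vec dd \<Longrightarrow> N x = 0 \<longleftrightarrow> x = 0\<^sub>v dd"
  unfolding is_vnorm_def by blast

lemma vnorm_zero: "is_vnorm dd N \<Longrightarrow> N (0\<^sub>v dd) = 0"
  using vnorm_eq_0_iff[of dd N "0\<^sub>v dd"] by simp

lemma vnorm_nonneg:
  assumes N: "is_vnorm dd N" and x: "x \<in> carrier_vec dd"
  shows "0 \<le> N x"
proof -
  have "x + (-1) \<cdot>\<^sub>v x = 0\<^sub>v dd"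
    using x by (intro eq_vecI) auto
  then have "0 = N (x + (-1) \<cdot>\<^sub>v x)"
    using vnorm_zero[OF N] by simp
  also have "\<dots> \<le> N x + N ((-1) \<cdot>\<^sub>v x)"
    using vnorm_triangle[OF N x] x by simp
  also have "\<dots> = 2 * N x"
    using vnorm_scale[OF N x, of "-1"] by simp
  finally show ?thesis by simp
qed

lemma vnorm_diff_le:
  assumes N: "is_vnorm dd N" and u: "u \<in> carrier_vec dd" and w: "w \<in> carrier_vec dd"
  shows "N u - N w \<le> N (u - w)"
proof -
  have "u = w + (u - w)"
    using u w by (intro eq_vecI) auto
  then show ?thesis
    using vnorm_triangle[OF N w, of "u - w"] u w by (metis minus_carrier_vec diff_le_eq add.commute)
qed

lemma vnorm_sum:
  assumes N: "is_vnorm dd N" and S: "finite S" and F: "\<And>r. r \<in> S \<Longrightarrow> F r \<in> carrier_vec dd"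
  shows "N (Matrix.vec dd (\<lambda>k. \<Sum>r\<in>S. F r $ k)) \<le> (\<Sum>r\<in>S. N (F r))"
  using S F
proof (induction S rule: finite_induct)
  case empty
  have "Matrix.vec dd (\<lambda>k. 0 :: complex) = 0\<^sub>v dd"
    by (intro eq_vecI) auto
  then show ?case
    by (simp only: sum.empty vnorm_zero[OF N] order.refl)
next
  case (insert a S)
  have "Matrix.vec dd (\<lambda>k. \<Sum>r\<in>insert a S. F r $ k) = F a + Matrix.vec dd (\<lambda>k. \<Sum>r\<in>S. F r $ k)"
    using insert by (intro eq_vecI) auto
  also have "N \<dots> \<le> N (F a) + N (Matrix.vec dd (\<lambda>k. \<Sum>r\<in>S. F r $ k))"
    using insert by (intro vnorm_triangle[OF N]) auto
  finally show ?case
    using insert by simp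
qed

lemma vnorm_le_coordinates:
  assumes N: "is_vnorm dd N" and w: "w \<in> carrier_vec dd"
  shows "N w \<le> (\<Sum>r<dd. cmod (w $ r) * N (unit_vec dd r))"
proof -
  have "w = Matrix.vec dd (\<lambda>k. \<Sum>r<dd. ((w $ r) \<cdot>\<^sub>v unit_vec dd r) $ k)"
    using w by (intro eq_vecI) (auto simp: unit_vec_def if_distrib cong: if_cong)
  then have "N w \<le> (\<Sum>r<dd. N ((w $ r) \<cdot>\<^sub>v unit_vec dd r))"
    using vnorm_sum[OF N, of "{..<dd}" "\<lambda>r. (w $ r) \<cdot>\<^sub>v unit_vec dd r"] by simp
  also have "\<dots> = (\<Sum>r<dd. cmod (w $ r) * N (unit_vec dd r))"
    by (intro sum.cong refl vnorm_scale[OF N]) auto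
  finally show ?thesis .
qed

lemma vnorm_vec_dist_le:
  assumes N: "is_vnorm dd N"
  shows "\<bar>N (Matrix.vec dd f) - N (Matrix.vec dd h)\<bar> \<le> (\<Sum>r<dd. cmod (f r - h r) * N (unit_vec dd r))"
proof -
  have "N (Matrix.vec dd f) - N (Matrix.vec dd h) \<le> (\<Sum>r<dd. cmod (f r - h r) * N (unit_vec dd r))"
    for f h :: "nat \<Rightarrow> complex"
  proof -
    have "N (Matrix.vec dd f) - N (Matrix.vec dd h) \<le> N (Matrix.vec dd f - Matrix.vec dd h)"
      by (rule vnorm_diff_le[OF N]) auto
    also have "\<dots> \<le> (\<Sum>r<dd. cmod ((Matrix.vec dd f - Matrix.vec dd h) $ r) * N (unit_vec dd r))"
      by (rule vnorm_le_coordinates[OF N]) auto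
    also have "\<dots> = (\<Sum>r<dd. cmod (f r - h r) * N (unit_vec dd r))"
      by (intro sum.cong) auto
    finally show ?thesis .
  qed
  from this[of f h] this[of h f] show ?thesis
    by (simp add: norm_minus_commute abs_le_iff)
qed

lemma vnorm_continuous:
  assumes N: "is_vnorm dd N"
  shows "continuous_on UNIV (\<lambda>f :: nat \<Rightarrow> complex. N (Matrix.vec dd f))"
proof (rule continuous_on_sequentiallyI)
  fix x :: "nat \<Rightarrow> nat \<Rightarrow> complex" and a
  assume "x \<longlonglongrightarrow> a"
  then have "(\<lambda>k. x k r) \<longlonglongrightarrow> a r" for r
    by (rule continuous_on_tendsto_compose[OF continuous_on_product_coordinates]) auto
  then have "(\<lambda>k. \<Sum>r<dd. cmod (x k r - a r) * N (unit_vec dd r)) \<longlonglongrightarrow> 0"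
    by (intro tendsto_null_sum tendsto_mult_left_zero tendsto_norm_zero LIM_zero)
  then have "(\<lambda>k. N (Matrix.vec dd (x k)) - N (Matrix.vec dd a)) \<longlonglongrightarrow> 0"
    by (rule Lim_null_comparison[rotated]) (simp add: vnorm_vec_dist_le[OF N])
  then show "(\<lambda>k. N (Matrix.vec dd (x k))) \<longlonglongrightarrow> N (Matrix.vec dd a)"
    by (rule LIM_zero_cancel)
qed

lemma vnorm_bounded_below_on_max_sphere:
  assumes N: "is_vnorm dd N"
  shows "\<exists>m>0. \<forall>v\<in>carrier_vec dd. (\<forall>r<dd. cmod (v $ r) \<le> 1) \<longrightarrow> (\<exists>r<dd. cmod (v $ r) = 1) \<longrightarrow> m \<le> N v"
proof -
  define S where "S = (\<lambda>r::nat. if r < dd then cball (0::complex) 1 else {0})"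
  define K where "K = PiE UNIV S \<inter> (\<Union>r<dd. {f. cmod (f r) = 1})"
  have "compactin (product_topology (\<lambda>_. euclidean) UNIV) (PiE UNIV S)"
    by (subst compactin_PiE) (auto simp: S_def compactin_euclidean_iff compact_cball)
  then have "compact (PiE UNIV S)"
    by (simp add: euclidean_product_topology compactin_euclidean_iff)
  moreover have "closed (\<Union>r<dd. {f::nat \<Rightarrow> complex. cmod (f r) = 1})"
    by (intro closed_UN ballI closed_Collect_eq continuous_intros continuous_on_product_coordinates) auto
  ultimately have K: "compact K"
    unfolding K_def by (rule compact_Int_closed)
  define restr where "restr = (\<lambda>v r. if r < dd then v $ r else 0 :: complex)"
  have restr_in_K: "restr v \<in> K" if "\<forall>r<dd. cmod (v $ r) \<le> 1" "\<exists>r<dd. cmod (v $ r) = 1" for v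
    using that by (auto simp: K_def S_def restr_def PiE_UNIV_domain)
  have vec_restr: "Matrix.vec dd (restr v) = v" if "v \<in> carrier_vec dd" for v
    using that by (intro eq_vecI) (auto simp: restr_def)
  show ?thesis
  proof (cases "K = {}")
    case True
    then show ?thesis
      using restr_in_K by (intro exI[of _ 1]) auto
  next
    case False
    obtain f0 where f0: "f0 \<in> K" and min: "\<And>f. f \<in> K \<Longrightarrow> N (Matrix.vec dd f0) \<le> N (Matrix.vec dd f)"
      using continuous_attains_inf[OF K False continuous_on_subset[OF vnorm_continuous[OF N]]] by blast
    obtain r0 where "r0 < dd" "cmod (f0 r0) = 1"
      using f0 by (auto simp: K_def)
    then have "Matrix.vec dd f0 \<noteq> 0\<^sub>v dd"
      by (metis index_vec index_zero_vec(1) norm_zero zero_neq_one)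
    then have "N (Matrix.vec dd f0) > 0"
      using vnorm_nonneg[OF N] vnorm_eq_0_iff[OF N] by (metis less_eq_real_def vec_carrier)
    with min restr_in_K vec_restr show ?thesis
      by metis
  qed
qed

lemma vnorm_coordinate_bound:
  assumes N: "is_vnorm dd N"
  shows "\<exists>c>0. \<forall>v\<in>carrier_vec dd. \<forall>k<dd. cmod (v $ k) \<le> c * N v"
proof -
  obtain m where m: "m > 0"
    and sphere: "\<And>v. v \<in> carrier_vec dd \<Longrightarrow> \<forall>r<dd. cmod (v $ r) \<le> 1 \<Longrightarrow> \<exists>r<dd. cmod (v $ r) = 1 \<Longrightarrow> m \<le> N v"
    using vnorm_bounded_below_on_max_sphere[OF N] by blast
  have "cmod (v $ k) \<le> 1 / m * N v" if v: "v \<in> carrier_vec dd" and k: "k < dd" for v k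
  proof -
    define M where "M = Max ((\<lambda>r. cmod (v $ r)) ` {..<dd})"
    have le_M: "cmod (v $ r) \<le> M" if "r < dd" for r
      unfolding M_def using that by (intro Max_ge) auto
    obtain r1 where r1: "r1 < dd" "cmod (v $ r1) = M"
      using Max_in[of "(\<lambda>r. cmod (v $ r)) ` {..<dd}"] k unfolding M_def by fastforce
    show ?thesis
    proof (cases "M = 0")
      case True
      then show ?thesis
        using le_M[OF k] vnorm_nonneg[OF N v] m by simp
    next
      case False
      then have M: "M > 0"
        using r1 by (metis norm_ge_zero less_eq_real_def)
      define w where "w = complex_of_real (inverse M) \<cdot>\<^sub>v v"
      have w_coord: "cmod (w $ r) = cmod (v $ r) / M" if "r < dd" for r
        using v that M by (simp add: w_def norm_mult norm_inverse divide_inverse)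
      have "m \<le> N w"
      proof (rule sphere)
        show "w \<in> carrier_vec dd"
          using v by (simp add: w_def)
        show "\<forall>r<dd. cmod (w $ r) \<le> 1"
          using le_M M by (simp add: w_coord)
        show "\<exists>r<dd. cmod (w $ r) = 1"
          using r1 M by (auto simp: w_coord)
      qed
      also have "N w = N v / M"
        using vnorm_scale[OF N v] M by (simp add: w_def divide_inverse norm_inverse)
      finally have "M \<le> 1 / m * N v"
        using M m by (simp add: field_simps)
      with le_M[OF k] show ?thesis
        by linarith
    qed
  qed
  with m show ?thesis
    by (intro exI[of _ "1 / m"]) auto
qed

lemma mult_mat_vec_index_sum:
  "A \<in> carrier_mat dr dc \<Longrightarrow> v \<in> carrier_vec dc \<Longrightarrow> r < dr \<Longrightarrow>
   (A *\<^sub>v v) $ r = (\<Sum>k<dc. A $$ (r, k) * v $ k)"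
  by (auto simp: scalar_prod_def lessThan_atLeast0 intro!: sum.cong)

lemma mult_mat_vec_zero: "A \<in> carrier_mat r c \<Longrightarrow> A *\<^sub>v 0\<^sub>v c = 0\<^sub>v r"
  by (intro eq_vecI) auto

lemma vnorm_mult_mat_vec_bounded:
  assumes Nin: "is_vnorm dc Nin" and Nout: "is_vnorm dr Nout" and A: "A \<in> carrier_mat dr dc"
  shows "\<exists>B. \<forall>v\<in>carrier_vec dc. Nout (A *\<^sub>v v) \<le> B * Nin v"
proof -
  obtain c where c: "\<And>v k. v \<in> carrier_vec dc \<Longrightarrow> k < dc \<Longrightarrow> cmod (v $ k) \<le> c * Nin v"
    using vnorm_coordinate_bound[OF Nin] by blast
  define row_bound where "row_bound r = (\<Sum>k<dc. cmod (A $$ (r, k)) * c)" for r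
  have row: "cmod ((A *\<^sub>v v) $ r) \<le> row_bound r * Nin v" if v: "v \<in> carrier_vec dc" and r: "r < dr" for v r
  proof -
    have "cmod ((A *\<^sub>v v) $ r) \<le> (\<Sum>k<dc. cmod (A $$ (r, k)) * cmod (v $ k))"
      using mult_mat_vec_index_sum[OF A v r] by (simp add: norm_mult order_trans[OF norm_sum])
    also have "\<dots> \<le> (\<Sum>k<dc. cmod (A $$ (r, k)) * (c * Nin v))"
      using c v by (intro sum_mono mult_left_mono) auto
    finally show ?thesis
      by (simp add: row_bound_def sum_distrib_right mult.assoc)
  qed
  have "Nout (A *\<^sub>v v) \<le> (\<Sum>r<dr. row_bound r * Nout (unit_vec dr r)) * Nin v"
    if v: "v \<in> carrier_vec dc" for v
  proof -
    have "Nout (A *\<^sub>v v) \<le> (\<Sum>r<dr. cmod ((A *\<^sub>v v) $ r) * Nout (unit_vec dr r))"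
      using A v by (intro vnorm_le_coordinates[OF Nout]) auto
    also have "\<dots> \<le> (\<Sum>r<dr. row_bound r * Nin v * Nout (unit_vec dr r))"
      using row v vnorm_nonneg[OF Nout] by (intro sum_mono mult_right_mono) auto
    also have "\<dots> = (\<Sum>r<dr. row_bound r * Nout (unit_vec dr r)) * Nin v"
      by (subst sum_distrib_right) (simp add: mult_ac)
    finally show ?thesis .
  qed
  then show ?thesis
    by blast
qed

lemma opnorm_set_bdd_above:
  assumes Nin: "is_vnorm dc Nin" and Nout: "is_vnorm dr Nout" and A: "A \<in> carrier_mat dr dc"
  shows "bdd_above {Nout (A *\<^sub>v v) | v. v \<in> carrier_vec dc \<and> Nin v \<le> 1}"
proof -
  obtain B where B: "\<And>v. v \<in> carrier_vec dc \<Longrightarrow> Nout (A *\<^sub>v v) \<le> B * Nin v"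
    using vnorm_mult_mat_vec_bounded[OF Nin Nout A] by blast
  have "Nout (A *\<^sub>v v) \<le> max 0 B" if "v \<in> carrier_vec dc" "Nin v \<le> 1" for v
  proof -
    have "Nout (A *\<^sub>v v) \<le> max 0 B * Nin v"
      using B[OF that(1)] vnorm_nonneg[OF Nin that(1)] by (meson max.cobounded2 mult_right_mono order_trans)
    also have "\<dots> \<le> max 0 B"
      using that(2) by (simp add: mult_left_le)
    finally show ?thesis .
  qed
  then show ?thesis
    by (auto intro!: bdd_aboveI[where M="max 0 B"])
qed

lemma opnorm_nonneg:
  assumes Nin: "is_vnorm dc Nin" and Nout: "is_vnorm dr Nout" and A: "A \<in> carrier_mat dr dc"
  shows "0 \<le> opnorm Nin Nout dc A"
proof -
  have "Nout (A *\<^sub>v 0\<^sub>v dc) = 0"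
    using vnorm_zero[OF Nout] mult_mat_vec_zero[OF A] by simp
  then show ?thesis
    unfolding opnorm_def using vnorm_zero[OF Nin]
    by (intro cSup_upper2[OF _ _ opnorm_set_bdd_above[OF Nin Nout A], where x=0]) force+
qed

lemma opnorm_mult_mat_vec_le:
  assumes Nin: "is_vnorm dc Nin" and Nout: "is_vnorm dr Nout" and A: "A \<in> carrier_mat dr dc"
    and v: "v \<in> carrier_vec dc"
  shows "Nout (A *\<^sub>v v) \<le> opnorm Nin Nout dc A * Nin v"
proof (cases "Nin v = 0")
  case True
  then show ?thesis
    using vnorm_eq_0_iff[OF Nin v] vnorm_zero[OF Nout] mult_mat_vec_zero[OF A] by simp
next
  case False
  then have pos: "Nin v > 0"
    using vnorm_nonneg[OF Nin v] by simp
  define u where "u = complex_of_real (inverse (Nin v)) \<cdot>\<^sub>v v"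
  have u: "u \<in> carrier_vec dc" "Nin u \<le> 1"
    using vnorm_scale[OF Nin v] pos v by (simp_all add: u_def norm_inverse)
  moreover have "Nout (A *\<^sub>v u) = inverse (Nin v) * Nout (A *\<^sub>v v)"
    using vnorm_scale[OF Nout mult_mat_vec_carrier[OF A v]] pos
    by (simp add: u_def mult_mat_vec[OF A v] norm_inverse)
  ultimately have "inverse (Nin v) * Nout (A *\<^sub>v v) \<le> opnorm Nin Nout dc A"
    unfolding opnorm_def using u
    by (intro cSup_upper[OF _ opnorm_set_bdd_above[OF Nin Nout A]]) (metis (mono_tags, lifting) mem_Collect_eq)
  then show ?thesis
    using pos by (simp add: field_simps)
qed

lemma opnorm_pow_mult_mat_vec_le:
  assumes N: "is_vnorm dd N" and A: "A \<in> carrier_mat dd dd" and v: "v \<in> carrier_vec dd"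
  shows "N ((A ^\<^sub>m t) *\<^sub>v v) \<le> opnorm N N dd A ^ t * N v"
  using v
proof (induction t arbitrary: v)
  case 0
  then show ?case
    using A by simp
next
  case (Suc t)
  have "N ((A ^\<^sub>m Suc t) *\<^sub>v v) = N ((A ^\<^sub>m t) *\<^sub>v (A *\<^sub>v v))"
    using A Suc.prems by (simp add: assoc_mult_mat_vec[of _ dd dd])
  also have "\<dots> \<le> opnorm N N dd A ^ t * N (A *\<^sub>v v)"
    using Suc A by simp
  also have "\<dots> \<le> opnorm N N dd A ^ t * (opnorm N N dd A * N v)"
    using opnorm_nonneg[OF N N A] opnorm_mult_mat_vec_le[OF N N A Suc.prems]
    by (intro mult_left_mono) auto
  finally show ?case
    by (simp add: mult_ac)
qed

lemma minv_mat:
  fixes A :: "complex mat"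
  assumes A: "A \<in> carrier_mat m m" and inv: "invertible_mat A"
  shows "minv A \<in> carrier_mat m m" "A * minv A = 1\<^sub>m m" "minv A * A = 1\<^sub>m m"
proof -
  obtain B where AB: "inverts_mat A B" and BA: "inverts_mat B A"
    using inv unfolding invertible_mat_def by blast
  have "B \<in> carrier_mat m m"
    using AB BA A unfolding inverts_mat_def by (metis carrier_matD carrier_matI index_mult_mat(3) index_one_mat(3))
  with AB BA A have "B \<in> carrier_mat (dim_row A) (dim_row A) \<and> inverts_mat A B \<and> inverts_mat B A"
    by auto
  then have "minv A \<in> carrier_mat (dim_row A) (dim_row A) \<and> inverts_mat A (minv A) \<and> inverts_mat (minv A) A"
    unfolding minv_def by (rule someI)
  then show "minv A \<in> carrier_mat m m" "A * minv A = 1\<^sub>m m" "minv A * A = 1\<^sub>m m"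
    using A unfolding inverts_mat_def by auto
qed

lemma minv_mult_mat_vec_cancel:
  fixes A :: "complex mat"
  assumes A: "A \<in> carrier_mat m m" and inv: "invertible_mat A" and z: "z \<in> carrier_vec m"
  shows "minv A *\<^sub>v (A *\<^sub>v z) = z" "A *\<^sub>v (minv A *\<^sub>v z) = z"
  using assoc_mult_mat_vec[OF minv_mat(1)[OF A inv] A z] assoc_mult_mat_vec[OF A minv_mat(1)[OF A inv] z]
    minv_mat[OF A inv] z by simp_all

lemma assoc_mult_mat_vec4:
  assumes A: "A \<in> carrier_mat n1 n2" and B: "B \<in> carrier_mat n2 n3" and C: "C \<in> carrier_mat n3 n4"
    and E: "E \<in> carrier_mat n4 n5" and v: "v \<in> carrier_vec n5"
  shows "(A * B * C * E) *\<^sub>v v = A *\<^sub>v (B *\<^sub>v (C *\<^sub>v (E *\<^sub>v v)))"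
  using assoc_mult_mat_vec[OF mult_carrier_mat[OF mult_carrier_mat[OF A B] C] E v]
    assoc_mult_mat_vec[OF mult_carrier_mat[OF A B] C mult_mat_vec_carrier[OF E v]]
    assoc_mult_mat_vec[OF A B mult_mat_vec_carrier[OF C mult_mat_vec_carrier[OF E v]]]
  by simp

lemma pow_mat_Suc_mult_mat_vec:
  assumes A: "A \<in> carrier_mat m m" and z: "z \<in> carrier_vec m"
  shows "A ^\<^sub>m Suc k *\<^sub>v z = A *\<^sub>v (A ^\<^sub>m k *\<^sub>v z)"
  using z
proof (induction k arbitrary: z)
  case 0
  then show ?case
    using A by simp
next
  case (Suc k)
  have "A ^\<^sub>m Suc (Suc k) *\<^sub>v z = A ^\<^sub>m Suc k *\<^sub>v (A *\<^sub>v z)"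
    by (subst pow_mat.simps(2)) (rule assoc_mult_mat_vec[OF pow_carrier_mat[OF A] A Suc.prems])
  also have "\<dots> = A *\<^sub>v (A ^\<^sub>m k *\<^sub>v (A *\<^sub>v z))"
    using A Suc by simp
  also have "A ^\<^sub>m k *\<^sub>v (A *\<^sub>v z) = A ^\<^sub>m Suc k *\<^sub>v z"
    by (subst pow_mat.simps(2)) (rule assoc_mult_mat_vec[OF pow_carrier_mat[OF A] A Suc.prems, symmetric])
  finally show ?case .
qed

lemma diagm_carrier_mat [simp]: "diagm k a \<in> carrier_mat k k"
  by (simp add: diagm_def)

lemma diagm_dims [simp]: "dim_row (diagm k a) = k" "dim_col (diagm k a) = k"
  by (simp_all add: diagm_def)

lemma diagm_mult_vec_carrier [simp]: "diagm k a *\<^sub>v u \<in> carrier_vec k"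
  by (rule carrier_vecI) (simp add: diagm_def)

lemma diagm_mult_vec_index:
  assumes u: "u \<in> carrier_vec k" and l: "l < k"
  shows "(diagm k a *\<^sub>v u) $ l = a l * u $ l"
proof -
  have "(diagm k a *\<^sub>v u) $ l = (\<Sum>i<k. diagm k a $$ (l, i) * u $ i)"
    using mult_mat_vec_index_sum[OF diagm_carrier_mat u l] .
  also have "\<dots> = (\<Sum>i<k. if i = l then a l * u $ l else 0)"
    using l by (intro sum.cong) (auto simp: diagm_def)
  finally show ?thesis
    using l by simp
qed

lemma diagonalization_eigenvalue:
  fixes A V :: "complex mat"
  assumes A: "A \<in> carrier_mat m m" and V: "V \<in> carrier_mat m m" and Vinv: "invertible_mat V"
    and AV: "A * V = V * diagm m lam" and l: "l < m"
  shows "lam l \<in> spectrum A"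
proof -
  have Vl: "col V l = V *\<^sub>v unit_vec m l"
    using col_mult2[OF V one_carrier_mat l] V l by simp
  have "col (diagm m lam) l = lam l \<cdot>\<^sub>v unit_vec m l"
    using l by (intro eq_vecI) (auto simp: diagm_def unit_vec_def)
  then have "A *\<^sub>v col V l = lam l \<cdot>\<^sub>v col V l"
    using col_mult2[OF A V l] col_mult2[OF V diagm_carrier_mat l] AV V l Vl
    by (simp add: mult_mat_vec)
  moreover have "col V l \<noteq> 0\<^sub>v m"
  proof
    assume "col V l = 0\<^sub>v m"
    then have "unit_vec m l = minv V *\<^sub>v 0\<^sub>v m"
      using Vl minv_mult_mat_vec_cancel(1)[OF V Vinv, of "unit_vec m l"] l by simp
    also have "\<dots> = 0\<^sub>v m"
      by (rule mult_mat_vec_zero[OF minv_mat(1)[OF V Vinv]])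
    finally have "unit_vec m l $ l = (0\<^sub>v m :: complex Matrix.vec) $ l"
      by simp
    then show False
      using l by simp
  qed
  moreover have "col V l \<in> carrier_vec m"
    using V l by simp
  ultimately show ?thesis
    using A unfolding spectrum_def eigenvalue_def eigenvector_def by auto
qed

lemma zero_notin_spectrum:
  fixes A :: "complex mat"
  assumes A: "A \<in> carrier_mat m m" and inv: "invertible_mat A"
  shows "0 \<notin> spectrum A"
proof
  assume "0 \<in> spectrum A"
  then obtain v where v: "v \<in> carrier_vec m" "v \<noteq> 0\<^sub>v m" and Av: "A *\<^sub>v v = 0 \<cdot>\<^sub>v v"
    using A unfolding spectrum_def eigenvalue_def eigenvector_def by auto
  have "0 \<cdot>\<^sub>v v = 0\<^sub>v m"
    using v(1) by (intro eq_vecI) auto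
  then have "v = minv A *\<^sub>v 0\<^sub>v m"
    using minv_mult_mat_vec_cancel(1)[OF A inv v(1)] Av by simp
  also have "\<dots> = 0\<^sub>v m"
    by (rule mult_mat_vec_zero[OF minv_mat(1)[OF A inv]])
  finally show False
    using v(2) by simp
qed

lemma diagonalization_conj_mult_vec:
  fixes A V :: "complex mat"
  assumes A: "A \<in> carrier_mat m m" and V: "V \<in> carrier_mat m m" and Vinv: "invertible_mat V"
    and AV: "A * V = V * diagm m lam" and y: "y \<in> carrier_vec m"
  shows "minv V *\<^sub>v (A *\<^sub>v y) = diagm m lam *\<^sub>v (minv V *\<^sub>v y)"
proof -
  define w where "w = minv V *\<^sub>v y"
  have w: "w \<in> carrier_vec m"
    using minv_mat(1)[OF V Vinv] y by (simp add: w_def)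
  have "A *\<^sub>v y = A *\<^sub>v (V *\<^sub>v w)"
    using minv_mult_mat_vec_cancel(2)[OF V Vinv y] by (simp add: w_def)
  also have "\<dots> = (V * diagm m lam) *\<^sub>v w"
    using assoc_mult_mat_vec[OF A V w] AV by simp
  also have "\<dots> = V *\<^sub>v (diagm m lam *\<^sub>v w)"
    using assoc_mult_mat_vec[OF V diagm_carrier_mat w] .
  finally show ?thesis
    using minv_mult_mat_vec_cancel(1)[OF V Vinv, of "diagm m lam *\<^sub>v w"] w by (simp add: w_def)
qed

lemma diagonalization_inverse_mult_vec:
  fixes A V :: "complex mat"
  assumes A: "A \<in> carrier_mat m m" and Ainv: "invertible_mat A" and V: "V \<in> carrier_mat m m"
    and AV: "A * V = V * diagm m lam" and lam: "\<And>l. l < m \<Longrightarrow> lam l \<noteq> 0"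
    and z: "z \<in> carrier_vec m"
  shows "minv A *\<^sub>v (V *\<^sub>v z) = V *\<^sub>v (diagm m (\<lambda>l. 1 / lam l) *\<^sub>v z)"
proof -
  define u where "u = diagm m (\<lambda>l. 1 / lam l) *\<^sub>v z"
  have u: "u \<in> carrier_vec m"
    using z by (simp add: u_def)
  have "diagm m lam *\<^sub>v u = z"
  proof (rule eq_vecI)
    fix l
    assume "l < dim_vec z"
    then have l: "l < m"
      using z by simp
    have "(diagm m lam *\<^sub>v u) $ l = lam l * u $ l"
      by (rule diagm_mult_vec_index[OF u l])
    also have "u $ l = 1 / lam l * z $ l"
      unfolding u_def by (rule diagm_mult_vec_index[OF z l])
    finally show "(diagm m lam *\<^sub>v u) $ l = z $ l"
      using lam[OF l] by simp
  qed (use z in simp)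
  then have "V *\<^sub>v z = (V * diagm m lam) *\<^sub>v u"
    using assoc_mult_mat_vec[OF V diagm_carrier_mat u] by simp
  also have "\<dots> = A *\<^sub>v (V *\<^sub>v u)"
    using assoc_mult_mat_vec[OF A V u] AV by simp
  finally show ?thesis
    using minv_mult_mat_vec_cancel(1)[OF A Ainv] V u by (simp add: u_def)
qed

lemma sylvester_entrywise_mult_vec:
  fixes M :: "complex mat" and a b :: "nat \<Rightarrow> complex"
  assumes M: "M \<in> carrier_mat p q" and a: "\<And>l. l < p \<Longrightarrow> a l \<noteq> 0"
    and ab: "\<And>l m. l < p \<Longrightarrow> m < q \<Longrightarrow> a l \<noteq> b m" and u: "u \<in> carrier_vec q"
  defines "Ct \<equiv> Matrix.mat p q (\<lambda>(l, m). M $$ (l, m) / (1 - b m / a l))"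
  shows "Ct *\<^sub>v u = diagm p (\<lambda>l. 1 / a l) *\<^sub>v (Ct *\<^sub>v (diagm q b *\<^sub>v u)) + M *\<^sub>v u"
proof (rule eq_vecI)
  have Ct: "Ct \<in> carrier_mat p q"
    by (simp add: Ct_def)
  have bu: "diagm q b *\<^sub>v u \<in> carrier_vec q"
    using u by simp
  fix l
  assume "l < dim_vec (diagm p (\<lambda>l. 1 / a l) *\<^sub>v (Ct *\<^sub>v (diagm q b *\<^sub>v u)) + M *\<^sub>v u)"
  then have l: "l < p"
    using M by simp
  have entry: "M $$ (l, m) = Ct $$ (l, m) - 1 / a l * (Ct $$ (l, m) * b m)" if m: "m < q" for m
  proof -
    have "1 - b m / a l \<noteq> 0"
      using a[OF l] ab[OF l m] by (simp add: field_simps)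
    then have "M $$ (l, m) = Ct $$ (l, m) * (1 - b m / a l)"
      using l m by (simp add: Ct_def)
    then show ?thesis
      using a[OF l] by (simp add: field_simps)
  qed
  have "(Ct *\<^sub>v u) $ l = (\<Sum>m<q. Ct $$ (l, m) * u $ m)"
    by (rule mult_mat_vec_index_sum[OF Ct u l])
  also have "\<dots> = (\<Sum>m<q. 1 / a l * (Ct $$ (l, m) * (b m * u $ m)) + M $$ (l, m) * u $ m)"
  proof (rule sum.cong[OF refl])
    fix m
    assume "m \<in> {..<q}"
    then have "m < q"
      by simp
    then show "Ct $$ (l, m) * u $ m = 1 / a l * (Ct $$ (l, m) * (b m * u $ m)) + M $$ (l, m) * u $ m"
      by (simp only: entry) (simp add: algebra_simps)
  qed
  also have "\<dots> = 1 / a l * (\<Sum>m<q. Ct $$ (l, m) * (diagm q b *\<^sub>v u) $ m) + (\<Sum>m<q. M $$ (l, m) * u $ m)"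
    by (simp add: sum.distrib sum_distrib_left diagm_mult_vec_index[OF u] del: index_mult_mat_vec)
  also have "\<dots> = 1 / a l * (Ct *\<^sub>v (diagm q b *\<^sub>v u)) $ l + (M *\<^sub>v u) $ l"
    by (simp only: mult_mat_vec_index_sum[OF Ct bu l] mult_mat_vec_index_sum[OF M u l])
  also have "\<dots> = (diagm p (\<lambda>l. 1 / a l) *\<^sub>v (Ct *\<^sub>v (diagm q b *\<^sub>v u)) + M *\<^sub>v u) $ l"
    using l M by (simp add: diagm_mult_vec_index[OF mult_mat_vec_carrier[OF Ct bu] l] del: index_mult_mat_vec)
  finally show "(Ct *\<^sub>v u) $ l = (diagm p (\<lambda>l. 1 / a l) *\<^sub>v (Ct *\<^sub>v (diagm q b *\<^sub>v u)) + M *\<^sub>v u) $ l" .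
qed (use M in \<open>simp add: Ct_def\<close>)

lemma mult_mat_vec_sum:
  fixes A :: "'a :: comm_ring mat"
  assumes A: "A \<in> carrier_mat m k" and F: "\<And>j. j \<in> S \<Longrightarrow> F j \<in> carrier_vec k"
  shows "A *\<^sub>v Matrix.vec k (\<lambda>r. \<Sum>j\<in>S. c j * F j $ r) = Matrix.vec m (\<lambda>r. \<Sum>j\<in>S. c j * (A *\<^sub>v F j) $ r)"
proof (rule eq_vecI)
  fix r
  assume "r < dim_vec (Matrix.vec m (\<lambda>r. \<Sum>j\<in>S. c j * (A *\<^sub>v F j) $ r))"
  then have r: "r < m"
    by simp
  have "(A *\<^sub>v Matrix.vec k (\<lambda>r. \<Sum>j\<in>S. c j * F j $ r)) $ r = (\<Sum>q<k. A $$ (r, q) * (\<Sum>j\<in>S. c j * F j $ q))"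
    using mult_mat_vec_index_sum[OF A _ r] by simp
  also have "\<dots> = (\<Sum>j\<in>S. c j * (\<Sum>q<k. A $$ (r, q) * F j $ q))"
    by (simp add: sum_distrib_left sum.swap[of _ S] mult.left_commute)
  also have "\<dots> = (\<Sum>j\<in>S. c j * (A *\<^sub>v F j) $ r)"
    using mult_mat_vec_index_sum[OF A F r] by simp
  finally show "(A *\<^sub>v Matrix.vec k (\<lambda>r. \<Sum>j\<in>S. c j * F j $ r)) $ r = Matrix.vec m (\<lambda>r. \<Sum>j\<in>S. c j * (A *\<^sub>v F j) $ r) $ r"
    using r by simp
qed (use A in simp)

lemma minus_one_power_diff:
  assumes "j < k"
  shows "(-1 :: 'a :: ring_1) ^ (k - j) = - ((-1) ^ (k - 1 - j))"
proof -
  from assms have "k - j = Suc (k - 1 - j)"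
    by simp
  then show ?thesis
    by simp
qed

lemma tendsto_zero_dominated_geometric:
  fixes f :: "nat \<Rightarrow> real" and a c :: "'i \<Rightarrow> real"
  assumes S: "finite S" and f_nonneg: "\<And>t. 0 \<le> f t" and f_le: "\<And>t. f t \<le> (\<Sum>j\<in>S. c j * a j ^ t)"
    and a: "\<And>j. j \<in> S \<Longrightarrow> 0 \<le> a j \<and> a j < b"
  shows "(\<lambda>t. f t / b ^ t) \<longlonglongrightarrow> 0"
proof (cases "S = {}")
  case True
  then have "f = (\<lambda>_. 0)"
    using f_nonneg f_le by (auto intro: order_antisym)
  then show ?thesis
    by simp
next
  case False
  then have b: "b > 0"
    using a by force
  have "(\<lambda>t. \<Sum>j\<in>S. c j * (a j / b) ^ t) \<longlonglongrightarrow> 0"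
    using a b by (intro tendsto_null_sum tendsto_mult_right_zero LIMSEQ_power_zero) auto
  moreover have "\<forall>\<^sub>F t in sequentially. norm (f t / b ^ t) \<le> (\<Sum>j\<in>S. c j * (a j / b) ^ t)"
    using f_nonneg f_le b
    by (intro always_eventually allI) (simp add: divide_right_mono sum_divide_distrib[symmetric] power_divide)
  ultimately show ?thesis
    by (rule Lim_null_comparison[rotated])
qed

declare pert.simps [simp del]

locale cascade =
  fixes n :: nat and d :: "nat \<Rightarrow> nat" and L V C :: "nat \<Rightarrow> complex mat"
    and lam :: "nat \<Rightarrow> nat \<Rightarrow> complex"
  assumes Lcar: "\<And>k. k \<in> {1..n} \<Longrightarrow> L k \<in> carrier_mat (d k) (d k)"
    and Ccar: "\<And>k. k \<in> {2..n} \<Longrightarrow> C k \<in> carrier_mat (d k) (d (k - 1))"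
    and Linv: "\<And>k. k \<in> {1..n} \<Longrightarrow> invertible_mat (L k)"
    and Vcar: "\<And>k. k \<in> {1..n} \<Longrightarrow> V k \<in> carrier_mat (d k) (d k)"
    and Vinv: "\<And>k. k \<in> {1..n} \<Longrightarrow> invertible_mat (V k)"
    and diag: "\<And>k. k \<in> {1..n} \<Longrightarrow> L k * V k = V k * diagm (d k) (lam k)"
    and spec: "\<And>k l. k \<in> {1..n} \<Longrightarrow> l \<in> {1..n} \<Longrightarrow> k \<noteq> l \<Longrightarrow>
                 spectrum (L k) \<inter> spectrum (L l) = {}"
begin

abbreviation D :: "nat \<Rightarrow> nat \<Rightarrow> complex mat" where
  "D \<equiv> Dmat d L V C lam"

lemma lam_in_spectrum: "k \<in> {1..n} \<Longrightarrow> l < d k \<Longrightarrow> lam k l \<in> spectrum (L k)"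
  by (rule diagonalization_eigenvalue[OF Lcar Vcar Vinv diag])

lemma lam_nonzero:
  assumes "k \<in> {1..n}" "l < d k"
  shows "lam k l \<noteq> 0"
  using lam_in_spectrum[OF assms] zero_notin_spectrum[OF Lcar[OF assms(1)] Linv[OF assms(1)]] by auto

lemma lam_neq:
  assumes "k \<in> {1..n}" "k' \<in> {1..n}" "k \<noteq> k'" "l < d k" "m < d k'"
  shows "lam k l \<noteq> lam k' m"
  using spec[OF assms(1-3)] lam_in_spectrum[OF assms(1,4)] lam_in_spectrum[OF assms(2,5)] by auto

lemma Dmat_diag: "1 \<le> i \<Longrightarrow> D i i = 1\<^sub>m (d i)"
  by (cases i) auto

lemma Dmat_carrier: "1 \<le> j \<Longrightarrow> j \<le> i \<Longrightarrow> i \<le> n \<Longrightarrow> D i j \<in> carrier_mat (d i) (d j)"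
proof (induction i)
  case 0
  then show ?case
    by simp
next
  case (Suc k)
  show ?case
  proof (cases "j = Suc k")
    case False
    have "minv (L (Suc k)) \<in> carrier_mat (d (Suc k)) (d (Suc k))" "minv (V j) \<in> carrier_mat (d j) (d j)"
      using Suc.prems minv_mat(1)[OF Lcar Linv] minv_mat(1)[OF Vcar Vinv] by auto
    then show ?thesis
      using False Vcar[of "Suc k"] Suc.prems by (auto simp: Let_def)
  qed simp
qed

lemma Dmat_sylvester:
  assumes i: "2 \<le> i" "i \<le> n" and j: "1 \<le> j" "j < i" and y: "y \<in> carrier_vec (d j)"
  shows "L i *\<^sub>v (D i j *\<^sub>v y) = D i j *\<^sub>v (L j *\<^sub>v y) + C i *\<^sub>v (D (i - 1) j *\<^sub>v y)"
proof -
  have ir: "i \<in> {1..n}" and jr: "j \<in> {1..n}" and ic: "i \<in> {2..n}"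
    using i j by auto
  define M where "M = minv (V i) * C i * D (i - 1) j * V j"
  define Ct where "Ct = Matrix.mat (d i) (d j) (\<lambda>(l, m). M $$ (l, m) / (1 - lam j m / lam i l))"
  define w where "w = minv (V j) *\<^sub>v y"
  have Dij: "D i j = minv (L i) * V i * Ct * minv (V j)"
    using i j by (cases i) (auto simp: Let_def M_def Ct_def)
  have Li: "L i \<in> carrier_mat (d i) (d i)" and Lj: "L j \<in> carrier_mat (d j) (d j)"
    and Vi: "V i \<in> carrier_mat (d i) (d i)" and Vj: "V j \<in> carrier_mat (d j) (d j)"
    and Li': "minv (L i) \<in> carrier_mat (d i) (d i)" and Vi': "minv (V i) \<in> carrier_mat (d i) (d i)"
    and Vj': "minv (V j) \<in> carrier_mat (d j) (d j)" and Ci: "C i \<in> carrier_mat (d i) (d (i - 1))"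
    and D': "D (i - 1) j \<in> carrier_mat (d (i - 1)) (d j)" and Ct: "Ct \<in> carrier_mat (d i) (d j)"
    using ir jr ic i j Lcar Vcar minv_mat(1)[OF Lcar Linv] minv_mat(1)[OF Vcar Vinv] Ccar Dmat_carrier
    by (auto simp: Ct_def)
  note car = Li Lj Vi Vj Li' Vi' Vj' Ci D' Ct
  have M: "M \<in> carrier_mat (d i) (d j)"
    unfolding M_def by (rule mult_carrier_mat[OF mult_carrier_mat[OF mult_carrier_mat[OF Vi' Ci] D'] Vj])
  have w: "w \<in> carrier_vec (d j)"
    using car y by (simp add: w_def)
  have D_apply: "D i j *\<^sub>v z = minv (L i) *\<^sub>v (V i *\<^sub>v (Ct *\<^sub>v (minv (V j) *\<^sub>v z)))"
    if "z \<in> carrier_vec (d j)" for z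
    unfolding Dij by (rule assoc_mult_mat_vec4[OF Li' Vi Ct Vj' that])
  have lhs: "L i *\<^sub>v (D i j *\<^sub>v y) = V i *\<^sub>v (Ct *\<^sub>v w)"
    using D_apply[OF y] minv_mult_mat_vec_cancel(2)[OF Li Linv[OF ir]] car w by (simp add: w_def)
  have "D i j *\<^sub>v (L j *\<^sub>v y) = minv (L i) *\<^sub>v (V i *\<^sub>v (Ct *\<^sub>v (diagm (d j) (lam j) *\<^sub>v w)))"
    using D_apply diagonalization_conj_mult_vec[OF Lj Vj Vinv[OF jr] diag[OF jr] y] car y
    by (simp add: w_def)
  also have "\<dots> = V i *\<^sub>v (diagm (d i) (\<lambda>l. 1 / lam i l) *\<^sub>v (Ct *\<^sub>v (diagm (d j) (lam j) *\<^sub>v w)))"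
    using car by (intro diagonalization_inverse_mult_vec[OF Li Linv[OF ir] Vi diag[OF ir]]
        lam_nonzero[OF ir]) simp_all
  finally have rhs1: "D i j *\<^sub>v (L j *\<^sub>v y)
      = V i *\<^sub>v (diagm (d i) (\<lambda>l. 1 / lam i l) *\<^sub>v (Ct *\<^sub>v (diagm (d j) (lam j) *\<^sub>v w)))" .
  have "M *\<^sub>v w = minv (V i) *\<^sub>v (C i *\<^sub>v (D (i - 1) j *\<^sub>v (V j *\<^sub>v w)))"
    unfolding M_def by (rule assoc_mult_mat_vec4[OF Vi' Ci D' Vj w])
  then have rhs2: "C i *\<^sub>v (D (i - 1) j *\<^sub>v y) = V i *\<^sub>v (M *\<^sub>v w)"
    using minv_mult_mat_vec_cancel(2)[OF Vj Vinv[OF jr] y] minv_mult_mat_vec_cancel(2)[OF Vi Vinv[OF ir]]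
      car y by (simp add: w_def)
  have "Ct *\<^sub>v w = diagm (d i) (\<lambda>l. 1 / lam i l) *\<^sub>v (Ct *\<^sub>v (diagm (d j) (lam j) *\<^sub>v w)) + M *\<^sub>v w"
    unfolding Ct_def using M lam_nonzero[OF ir] lam_neq[OF ir jr] j w
    by (intro sylvester_entrywise_mult_vec) auto
  then show ?thesis
    using lhs rhs1 rhs2 car M w by (simp add: mult_add_distrib_mat_vec[OF Vi])
qed

definition signed_D_sum :: "nat \<Rightarrow> (nat \<Rightarrow> complex Matrix.vec) \<Rightarrow> complex Matrix.vec" where
  "signed_D_sum k w = Matrix.vec (d k) (\<lambda>r. \<Sum>j\<in>{1..k}. (-1) ^ (k - j) * (D k j *\<^sub>v w j) $ r)"

lemma signed_D_sum_cong: "(\<And>j. j \<in> {1..k} \<Longrightarrow> w j = w' j) \<Longrightarrow> signed_D_sum k w = signed_D_sum k w'"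
  unfolding signed_D_sum_def by simp

lemma signed_D_sum_index:
  assumes k: "1 \<le> k" and w: "w k \<in> carrier_vec (d k)" and r: "r < d k"
  shows "signed_D_sum k w $ r = w k $ r + (\<Sum>j\<in>{1..<k}. (-1) ^ (k - j) * (D k j *\<^sub>v w j) $ r)"
proof -
  have "{1..k} = insert k {1..<k}"
    using k by auto
  then show ?thesis
    using w r Dmat_diag[OF k] by (simp add: signed_D_sum_def)
qed

lemma signed_D_sum_1:
  assumes w: "w 1 \<in> carrier_vec (d 1)"
  shows "signed_D_sum 1 w = w 1"
proof (rule eq_vecI)
  fix r
  assume "r < dim_vec (w 1)"
  then show "signed_D_sum 1 w $ r = w 1 $ r"
    using signed_D_sum_index[of 1 w r] w by simp
qed (use w in \<open>simp add: signed_D_sum_def\<close>)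

lemma mult_L_signed_D_sum_index:
  assumes k: "2 \<le> k" "k \<le> n" and w: "\<And>j. j \<in> {1..k} \<Longrightarrow> w j \<in> carrier_vec (d j)" and r: "r < d k"
  shows "(L k *\<^sub>v signed_D_sum k w) $ r = (L k *\<^sub>v w k) $ r
    + (\<Sum>j\<in>{1..<k}. (-1) ^ (k - j) * (D k j *\<^sub>v (L j *\<^sub>v w j)) $ r)
    + (\<Sum>j\<in>{1..<k}. (-1) ^ (k - j) * (C k *\<^sub>v (D (k - 1) j *\<^sub>v w j)) $ r)"
proof -
  have kn: "k \<in> {1..n}" and kc: "k \<in> {2..n}"
    using k by auto
  have Dw: "D k j *\<^sub>v w j \<in> carrier_vec (d k)" if "j \<in> {1..k}" for j
    using Dmat_carrier[of j k] w[OF that] that k by auto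
  have "(L k *\<^sub>v signed_D_sum k w) $ r = (\<Sum>j\<in>{1..k}. (-1) ^ (k - j) * (L k *\<^sub>v (D k j *\<^sub>v w j)) $ r)"
    using mult_mat_vec_sum[OF Lcar[OF kn] Dw, where c="\<lambda>j. (-1) ^ (k - j)"] r
    by (simp only: signed_D_sum_def) simp
  also have "\<dots> = (L k *\<^sub>v w k) $ r + (\<Sum>j\<in>{1..<k}. (-1) ^ (k - j) * (L k *\<^sub>v (D k j *\<^sub>v w j)) $ r)"
  proof -
    have "{1..k} = insert k {1..<k}"
      using k by auto
    then show ?thesis
      using k w[of k] Lcar[OF kn] Dmat_diag[of k] by simp
  qed
  also have "(\<Sum>j\<in>{1..<k}. (-1) ^ (k - j) * (L k *\<^sub>v (D k j *\<^sub>v w j)) $ r)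
      = (\<Sum>j\<in>{1..<k}. (-1) ^ (k - j) * (D k j *\<^sub>v (L j *\<^sub>v w j)) $ r)
        + (\<Sum>j\<in>{1..<k}. (-1) ^ (k - j) * (C k *\<^sub>v (D (k - 1) j *\<^sub>v w j)) $ r)"
  proof -
    have "(L k *\<^sub>v (D k j *\<^sub>v w j)) $ r
        = (D k j *\<^sub>v (L j *\<^sub>v w j)) $ r + (C k *\<^sub>v (D (k - 1) j *\<^sub>v w j)) $ r" if j: "j \<in> {1..<k}" for j
    proof -
      have "D k j *\<^sub>v (L j *\<^sub>v w j) \<in> carrier_vec (d k)"
        using Dmat_carrier[of j k] Lcar[of j] w[of j] j k by auto
      then show ?thesis
        using Dmat_sylvester[OF k, of j "w j"] w[of j] j r Ccar[OF kc] by simp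
    qed
    then show ?thesis
      by (simp add: distrib_left sum.distrib)
  qed
  finally show ?thesis
    by (simp add: add.assoc)
qed

lemma mult_C_signed_D_sum_index:
  assumes k: "2 \<le> k" "k \<le> n" and w: "\<And>j. j \<in> {1..<k} \<Longrightarrow> w j \<in> carrier_vec (d j)" and r: "r < d k"
  shows "(C k *\<^sub>v signed_D_sum (k - 1) w) $ r
    = - (\<Sum>j\<in>{1..<k}. (-1) ^ (k - j) * (C k *\<^sub>v (D (k - 1) j *\<^sub>v w j)) $ r)"
proof -
  have ivl: "{1..k - 1} = {1..<k}"
    using k by auto
  have Dw: "D (k - 1) j *\<^sub>v w j \<in> carrier_vec (d (k - 1))" if "j \<in> {1..<k}" for j
    using that k by (intro mult_mat_vec_carrier[OF Dmat_carrier w[OF that]]) auto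
  have "(C k *\<^sub>v signed_D_sum (k - 1) w) $ r
      = (\<Sum>j\<in>{1..<k}. (-1) ^ (k - 1 - j) * (C k *\<^sub>v (D (k - 1) j *\<^sub>v w j)) $ r)"
    using mult_mat_vec_sum[where S="{1..<k}" and F="\<lambda>j. D (k - 1) j *\<^sub>v w j"
        and c="\<lambda>j. (-1) ^ (k - 1 - j)", OF Ccar Dw] k r
    by (simp only: signed_D_sum_def ivl) simp
  then show ?thesis
    by (simp add: minus_one_power_diff sum_negf[symmetric])
qed

lemma Lin_signed_D_sum:
  assumes z: "\<And>k. k \<in> {1..n} \<Longrightarrow> z k = signed_D_sum k w"
    and w: "\<And>j. j \<in> {1..n} \<Longrightarrow> w j \<in> carrier_vec (d j)" and k: "k \<in> {1..n}"
  shows "Lin L C z k = signed_D_sum k (\<lambda>j. L j *\<^sub>v w j)"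
proof (cases "k = 1")
  case True
  then have k1: "1 \<in> {1..n}"
    using k by simp
  have "signed_D_sum 1 w = w 1"
    by (rule signed_D_sum_1[of w, OF w[OF k1]])
  moreover have "signed_D_sum 1 (\<lambda>j. L j *\<^sub>v w j) = L 1 *\<^sub>v w 1"
    by (rule signed_D_sum_1) (use Lcar[OF k1] w[OF k1] in simp)
  ultimately show ?thesis
    using z[OF k1] True by (simp add: Lin_def)
next
  case False
  then have k2: "2 \<le> k" "k \<le> n"
    using k by auto
  have w': "w j \<in> carrier_vec (d j)" if "j \<in> {1..k}" for j
    using w that k by auto
  have "L k *\<^sub>v z k + C k *\<^sub>v z (k - 1) = signed_D_sum k (\<lambda>j. L j *\<^sub>v w j)"
  proof (rule eq_vecI)
    fix r
    assume "r < dim_vec (signed_D_sum k (\<lambda>j. L j *\<^sub>v w j))"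
    then have r: "r < d k"
      by (simp add: signed_D_sum_def)
    have "z (k - 1) = signed_D_sum (k - 1) w"
      using k2 by (intro z) auto
    then show "(L k *\<^sub>v z k + C k *\<^sub>v z (k - 1)) $ r = signed_D_sum k (\<lambda>j. L j *\<^sub>v w j) $ r"
      using mult_L_signed_D_sum_index[OF k2 w' r] mult_C_signed_D_sum_index[OF k2 _ r, of w]
        signed_D_sum_index[of k "\<lambda>j. L j *\<^sub>v w j" r] z[OF k] w' k2 k r Lcar[OF k] Ccar[of k]
      by (simp add: signed_D_sum_def)
  qed (use Lcar[OF k] Ccar[of k] k2 in \<open>simp add: signed_D_sum_def\<close>)
  then show ?thesis
    using k2 by (simp add: Lin_def)
qed

lemma Nom_iterate:
  assumes k: "k \<in> {1..n}" and y: "y k \<in> carrier_vec (d k)"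
  shows "(Nom L ^^ t) y k = L k ^\<^sub>m t *\<^sub>v y k"
proof (induction t)
  case 0
  then show ?case
    using Lcar[OF k] y by simp
next
  case (Suc t)
  then show ?case
    using pow_mat_Suc_mult_mat_vec[OF Lcar[OF k] y] by (simp add: Nom_def)
qed

end

locale cascade_orbit = cascade +
  fixes N :: "nat \<Rightarrow> complex Matrix.vec \<Rightarrow> real" and x :: "nat \<Rightarrow> complex Matrix.vec"
  assumes norms: "\<And>k. k \<in> {1..n} \<Longrightarrow> is_vnorm (d k) (N k)"
    and xcar: "\<And>k. k \<in> {1..n} \<Longrightarrow> x k \<in> carrier_vec (d k)"
begin

abbreviation opL :: "nat \<Rightarrow> real" where
  "opL k \<equiv> opnorm (N k) (N k) (d k) (L k)"

abbreviation opD :: "nat \<Rightarrow> nat \<Rightarrow> real" where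
  "opD i j \<equiv> opnorm (N j) (N i) (d j) (D i j)"

lemma opL_nonneg: "k \<in> {1..n} \<Longrightarrow> 0 \<le> opL k"
  by (rule opnorm_nonneg[OF norms norms Lcar])

lemma pert_carrier:
  assumes j: "j \<in> {1..n}"
  shows "pert d D x j \<in> carrier_vec (d j)"
  using xcar j by (subst pert.simps) auto

lemma signed_D_sum_pert:
  assumes k: "k \<in> {1..n}"
  shows "signed_D_sum k (pert d D x) = x k"
proof (rule eq_vecI)
  fix r
  assume "r < dim_vec (x k)"
  then have r: "r < d k"
    using xcar[OF k] by simp
  define S where "S = (\<Sum>j\<in>{1..<k}. (-1) ^ (k - 1 - j) * (D k j *\<^sub>v pert d D x j) $ r)"
  have "pert d D x k $ r = x k $ r + S"
    using r k by (subst pert.simps) (auto simp: S_def)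
  moreover have "(\<Sum>j\<in>{1..<k}. (-1) ^ (k - j) * (D k j *\<^sub>v pert d D x j) $ r) = - S"
    by (simp add: S_def minus_one_power_diff sum_negf[symmetric])
  ultimately show "signed_D_sum k (pert d D x) $ r = x k $ r"
    using signed_D_sum_index[of k "pert d D x" r] pert_carrier[OF k] k r by simp
qed (use xcar[OF k] in \<open>simp add: signed_D_sum_def\<close>)

lemma pert_power_carrier:
  assumes j: "j \<in> {1..n}"
  shows "L j ^\<^sub>m t *\<^sub>v pert d D x j \<in> carrier_vec (d j)"
  using mult_mat_vec_carrier[OF pow_carrier_mat[OF Lcar[OF j]] pert_carrier[OF j]] by simp

lemma Lin_iterate:
  assumes k: "k \<in> {1..n}"
  shows "(Lin L C ^^ t) x k = signed_D_sum k (\<lambda>j. L j ^\<^sub>m t *\<^sub>v pert d D x j)"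
  using k
proof (induction t arbitrary: k)
  case 0
  have "L j ^\<^sub>m 0 *\<^sub>v pert d D x j = pert d D x j" if "j \<in> {1..k}" for j
    using Lcar[of j] pert_carrier[of j] that 0 by auto
  then have "signed_D_sum k (\<lambda>j. L j ^\<^sub>m 0 *\<^sub>v pert d D x j) = signed_D_sum k (pert d D x)"
    by (rule signed_D_sum_cong)
  then show ?case
    using signed_D_sum_pert[OF 0] by simp
next
  case (Suc t)
  have p: "L j ^\<^sub>m t *\<^sub>v pert d D x j \<in> carrier_vec (d j)" if "j \<in> {1..n}" for j
    by (rule pert_power_carrier[OF that])
  have "(Lin L C ^^ Suc t) x k = signed_D_sum k (\<lambda>j. L j *\<^sub>v (L j ^\<^sub>m t *\<^sub>v pert d D x j))"
    using Lin_signed_D_sum[OF Suc.IH p Suc.prems] by simp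
  also have "\<dots> = signed_D_sum k (\<lambda>j. L j ^\<^sub>m Suc t *\<^sub>v pert d D x j)"
  proof (rule signed_D_sum_cong)
    fix j
    assume "j \<in> {1..k}"
    then show "L j *\<^sub>v (L j ^\<^sub>m t *\<^sub>v pert d D x j) = L j ^\<^sub>m Suc t *\<^sub>v pert d D x j"
      using Suc.prems by (intro pow_mat_Suc_mult_mat_vec[symmetric, of _ "d j"] Lcar pert_carrier) auto
  qed
  finally show ?case .
qed

lemma Lin_minus_Nom:
  assumes i: "i \<in> {1..n}"
  shows "(Lin L C ^^ t) x i - (Nom L ^^ t) (pertv d D x) i = Matrix.vec (d i)
    (\<lambda>r. \<Sum>j\<in>{1..<i}. ((-1) ^ (i - j) \<cdot>\<^sub>v (D i j *\<^sub>v (L j ^\<^sub>m t *\<^sub>v pert d D x j))) $ r)"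
proof -
  have p: "L j ^\<^sub>m t *\<^sub>v pert d D x j \<in> carrier_vec (d j)" if "j \<in> {1..n}" for j
    by (rule pert_power_carrier[OF that])
  have Dp: "D i j *\<^sub>v (L j ^\<^sub>m t *\<^sub>v pert d D x j) \<in> carrier_vec (d i)" if "j \<in> {1..<i}" for j
    using that i by (intro mult_mat_vec_carrier[OF Dmat_carrier p]) auto
  have nom: "(Nom L ^^ t) (pertv d D x) i = L i ^\<^sub>m t *\<^sub>v pert d D x i"
    using Nom_iterate[OF i] pert_carrier[OF i] by (simp add: pertv_def)
  show ?thesis
  proof (rule eq_vecI)
    fix r
    assume "r < dim_vec (Matrix.vec (d i)
      (\<lambda>r. \<Sum>j\<in>{1..<i}. ((-1) ^ (i - j) \<cdot>\<^sub>v (D i j *\<^sub>v (L j ^\<^sub>m t *\<^sub>v pert d D x j))) $ r))"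
    then have r: "r < d i"
      by simp
    have "(\<Sum>j\<in>{1..<i}. ((-1) ^ (i - j) \<cdot>\<^sub>v (D i j *\<^sub>v (L j ^\<^sub>m t *\<^sub>v pert d D x j))) $ r)
        = (\<Sum>j\<in>{1..<i}. (-1) ^ (i - j) * (D i j *\<^sub>v (L j ^\<^sub>m t *\<^sub>v pert d D x j)) $ r)"
    proof (rule sum.cong[OF refl])
      fix j
      assume "j \<in> {1..<i}"
      then show "((-1) ^ (i - j) \<cdot>\<^sub>v (D i j *\<^sub>v (L j ^\<^sub>m t *\<^sub>v pert d D x j))) $ r
          = (-1) ^ (i - j) * (D i j *\<^sub>v (L j ^\<^sub>m t *\<^sub>v pert d D x j)) $ r"
        using carrier_vecD[OF Dp] r by simp
    qed
    then show "((Lin L C ^^ t) x i - (Nom L ^^ t) (pertv d D x) i) $ r = Matrix.vec (d i)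
      (\<lambda>r. \<Sum>j\<in>{1..<i}. ((-1) ^ (i - j) \<cdot>\<^sub>v (D i j *\<^sub>v (L j ^\<^sub>m t *\<^sub>v pert d D x j))) $ r) $ r"
      using Lin_iterate[OF i, of t] signed_D_sum_index[of i "\<lambda>j. L j ^\<^sub>m t *\<^sub>v pert d D x j" r]
        p[OF i] carrier_vecD[OF p[OF i]] nom i r by simp
  qed (use nom Lcar[OF i] in \<open>simp add: Lin_iterate[OF i] signed_D_sum_def\<close>)
qed

lemma Lin_minus_Nom_norm_le:
  assumes i: "i \<in> {1..n}"
  shows "N i ((Lin L C ^^ t) x i - (Nom L ^^ t) (pertv d D x) i)
    \<le> (\<Sum>j\<in>{1..<i}. opD i j * N j (L j ^\<^sub>m t *\<^sub>v pert d D x j))"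
proof -
  have j: "j \<in> {1..n}" "D i j \<in> carrier_mat (d i) (d j)" "L j ^\<^sub>m t *\<^sub>v pert d D x j \<in> carrier_vec (d j)"
    if "j \<in> {1..<i}" for j
    using that i by (auto intro: Dmat_carrier pert_power_carrier)
  have "N i ((Lin L C ^^ t) x i - (Nom L ^^ t) (pertv d D x) i)
      = N i (Matrix.vec (d i) (\<lambda>r. \<Sum>j\<in>{1..<i}. ((-1) ^ (i - j) \<cdot>\<^sub>v (D i j *\<^sub>v (L j ^\<^sub>m t *\<^sub>v pert d D x j))) $ r))"
    by (simp only: Lin_minus_Nom[OF i])
  also have "\<dots> \<le> (\<Sum>j\<in>{1..<i}. N i ((-1) ^ (i - j) \<cdot>\<^sub>v (D i j *\<^sub>v (L j ^\<^sub>m t *\<^sub>v pert d D x j))))"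
    using mult_mat_vec_carrier[OF j(2,3)] by (intro vnorm_sum[OF norms[OF i] finite_atLeastLessThan]) auto
  also have "\<dots> \<le> (\<Sum>j\<in>{1..<i}. opD i j * N j (L j ^\<^sub>m t *\<^sub>v pert d D x j))"
  proof (rule sum_mono)
    fix j
    assume "j \<in> {1..<i}"
    note j = j[OF this]
    show "N i ((-1) ^ (i - j) \<cdot>\<^sub>v (D i j *\<^sub>v (L j ^\<^sub>m t *\<^sub>v pert d D x j)))
        \<le> opD i j * N j (L j ^\<^sub>m t *\<^sub>v pert d D x j)"
      using vnorm_scale[OF norms[OF i] mult_mat_vec_carrier[OF j(2,3)]]
        opnorm_mult_mat_vec_le[OF norms[OF j(1)] norms[OF i] j(2,3)] by (simp add: norm_power)
  qed
  finally show ?thesis .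
qed

lemma opD_power_le:
  assumes i: "i \<in> {1..n}" and j: "j \<in> {1..<i}"
  shows "opD i j * N j (L j ^\<^sub>m t *\<^sub>v pert d D x j) \<le> opD i j * N j (pert d D x j) * opL j ^ t"
proof -
  have jn: "j \<in> {1..n}"
    using i j by auto
  have "0 \<le> opD i j"
    using i j by (intro opnorm_nonneg[OF norms[OF jn] norms[OF i] Dmat_carrier]) auto
  from mult_left_mono[OF opnorm_pow_mult_mat_vec_le[OF norms[OF jn] Lcar[OF jn] pert_carrier[OF jn]] this]
  show ?thesis
    using jn by (simp add: mult_ac)
qed

lemma sum_opD_power_le:
  assumes i: "i \<in> {1..n}"
    and opL_le: "\<And>j. j \<in> {1..<i} \<Longrightarrow> opL j \<le> opL i"
  shows "(\<Sum>j\<in>{1..<i}. opD i j * N j (L j ^\<^sub>m t *\<^sub>v pert d D x j))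
    \<le> (\<Sum>j\<in>{1..<i}. opD i j * N j (pert d D x j)) * opL i ^ t"
  unfolding sum_distrib_right
proof (rule sum_mono)
  fix j
  assume j: "j \<in> {1..<i}"
  then have jn: "j \<in> {1..n}"
    using i by auto
  have "0 \<le> opD i j * N j (pert d D x j)"
    using i j pert_carrier[OF jn]
    by (intro mult_nonneg_nonneg opnorm_nonneg[OF norms[OF jn] norms[OF i] Dmat_carrier] vnorm_nonneg[OF norms[OF jn]]) auto
  then have "opD i j * N j (pert d D x j) * opL j ^ t \<le> opD i j * N j (pert d D x j) * opL i ^ t"
    using opL_le[OF j] opL_nonneg[OF jn] by (intro mult_left_mono power_mono)
  with opD_power_le[OF i j, of t]
  show "opD i j * N j (L j ^\<^sub>m t *\<^sub>v pert d D x j) \<le> opD i j * N j (pert d D x j) * opL i ^ t"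
    by linarith
qed

lemma Lin_minus_Nom_ratio_tendsto_zero:
  assumes i: "i \<in> {1..n}"
    and opL_less: "\<And>j. j \<in> {1..<i} \<Longrightarrow> opL j < opL i"
  shows "(\<lambda>t. N i ((Lin L C ^^ t) x i - (Nom L ^^ t) (pertv d D x) i) / opL i ^ t) \<longlonglongrightarrow> 0"
proof (rule tendsto_zero_dominated_geometric[where c="\<lambda>j. opD i j * N j (pert d D x j)" and a=opL])
  fix t
  show "0 \<le> N i ((Lin L C ^^ t) x i - (Nom L ^^ t) (pertv d D x) i)"
    using Lin_minus_Nom[OF i] by (simp add: vnorm_nonneg[OF norms[OF i]])
  show "N i ((Lin L C ^^ t) x i - (Nom L ^^ t) (pertv d D x) i)
      \<le> (\<Sum>j\<in>{1..<i}. opD i j * N j (pert d D x j) * opL j ^ t)"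
    using Lin_minus_Nom_norm_le[OF i] opD_power_le[OF i] by (meson order_trans sum_mono)
next
  fix j
  assume "j \<in> {1..<i}"
  then show "0 \<le> opL j \<and> opL j < opL i"
    using opL_less i by (auto intro: opL_nonneg)
qed simp

end

theorem theorem1:
  fixes n :: nat and d :: "nat \<Rightarrow> nat"
    and L V C :: "nat \<Rightarrow> complex mat" and lam :: "nat \<Rightarrow> nat \<Rightarrow> complex"
    and N :: "nat \<Rightarrow> complex Matrix.vec \<Rightarrow> real"
    and x :: "nat \<Rightarrow> complex Matrix.vec" and i :: nat
  assumes n: "n \<ge> 1"
    and d: "\<And>k. k \<in> {1..n} \<Longrightarrow> d k \<ge> 1"
    and norms: "\<And>k. k \<in> {1..n} \<Longrightarrow> is_vnorm (d k) (N k)"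
    and Lcar: "\<And>k. k \<in> {1..n} \<Longrightarrow> L k \<in> carrier_mat (d k) (d k)"
    and Ccar: "\<And>k. k \<in> {2..n} \<Longrightarrow> C k \<in> carrier_mat (d k) (d (k - 1))"
    and Linv: "\<And>k. k \<in> {1..n} \<Longrightarrow> invertible_mat (L k)"
    and Vcar: "\<And>k. k \<in> {1..n} \<Longrightarrow> V k \<in> carrier_mat (d k) (d k)"
    and Vinv: "\<And>k. k \<in> {1..n} \<Longrightarrow> invertible_mat (V k)"
    and diag: "\<And>k. k \<in> {1..n} \<Longrightarrow> L k * V k = V k * diagm (d k) (lam k)"
    and spec: "\<And>k l. k \<in> {1..n} \<Longrightarrow> l \<in> {1..n} \<Longrightarrow> k \<noteq> l \<Longrightarrow>
                 spectrum (L k) \<inter> spectrum (L l) = {}"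
    and mono: "\<And>k. k \<in> {1..<n} \<Longrightarrow>
                 opnorm (N k) (N k) (d k) (L k) < opnorm (N (k+1)) (N (k+1)) (d (k+1)) (L (k+1))"
    and le1: "opnorm (N n) (N n) (d n) (L n) \<le> 1"
    and xcar: "\<And>k. k \<in> {1..n} \<Longrightarrow> x k \<in> carrier_vec (d k)"
    and i: "i \<in> {1..n}"
  shows "(\<forall>t::nat.
      N i (((Lin L C ^^ t) x) i - ((Nom L ^^ t) (pertv d (Dmat d L V C lam) x)) i)
        \<le> (\<Sum>j\<in>{1..<i}. opnorm (N j) (N i) (d j) (Dmat d L V C lam i j)
              * N j ((L j ^\<^sub>m t) *\<^sub>v pert d (Dmat d L V C lam) x j))
      \<and> (\<Sum>j\<in>{1..<i}. opnorm (N j) (N i) (d j) (Dmat d L V C lam i j)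
              * N j ((L j ^\<^sub>m t) *\<^sub>v pert d (Dmat d L V C lam) x j))
        \<le> (\<Sum>j\<in>{1..<i}. opnorm (N j) (N i) (d j) (Dmat d L V C lam i j)
              * N j (pert d (Dmat d L V C lam) x j)) * opnorm (N i) (N i) (d i) (L i) ^ t)
    \<and> (\<lambda>t. N i (((Lin L C ^^ t) x) i - ((Nom L ^^ t) (pertv d (Dmat d L V C lam) x)) i)
             / opnorm (N i) (N i) (d i) (L i) ^ t) \<longlonglongrightarrow> 0"
proof -
  interpret cascade_orbit n d L V C lam N x
    using Lcar Ccar Linv Vcar Vinv diag spec norms xcar by unfold_locales
  have "opL k < opL (Suc k)" if "k \<in> {1..<n}" for k
    using mono[OF that] by simp
  then have opL_less: "opL j < opL i" if "j \<in> {1..<i}" for j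
    by (rule lift_Suc_mono_less_ivl[where N="{1..<n}"]) (use that i in auto)
  show ?thesis
    using Lin_minus_Nom_norm_le[OF i] sum_opD_power_le[OF i less_imp_le[OF opL_less]]
      Lin_minus_Nom_ratio_tendsto_zero[OF i opL_less] by blast
qed

end
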